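(* Let $L$ be a torsion-free $d$-dimensional Lie algebra over $\mathbb{C}[\![t]\!]$ and $*\in\{\le,\triangleleft\}$. Assume $L$ has a basis $B=\{x_1,\ldots,x_d\}$ which is nice with respect to $*$ and simple. Then $$R_L^*(T)=\sum_{\mathbf{n}\in\mathcal{C}_B^*\cap\mathbb{Z}^d}T^{n_1+n_2+\cdots+n_d},$$ where $\mathcal{C}_B^{\triangleleft}=\{\mathbf{y}\in\mathbb{R}_{\ge0}^d: y_l\le y_i \text{ and } y_l\le y_j \text{ whenever } [x_i,x_j]=ax_l,\ a\ne0\}$ and $\mathcal{C}_B^{\le}=\{\mathbf{y}\in\mathbb{R}_{\ge0}^d: y_l\le y_i+y_j \text{ whenever } [x_i,x_j]=ax_l,\ a\ne0\}$.
   Context: Reduced zeta function: with $\chi$ the Euler characteristic on complex constructible sets (unique integer-valued function with $\chi(\mathbb{C}^m)=1$, additive on disjoint constructible sets, multiplicative along constructible maps with fibres of constant Euler characteristic), and $B_n^{\le}$ (resp. $B_n^{\triangleleft}$) the constructible subset of the Grassmannian $\mathrm{Gr}(L/t^nL)$ of $\mathbb{C}[\![t]\!]$-submodules of $L$ of $\mathbb{C}$-codimension $n$ that are subalgebras (resp. ideals), $R_L^*(T)=\sum_{n\ge0}\chi(B_n^* )T^n$. Let $v$ be the $t$-adic valuation on $\mathbb{C}[\![t]\!]$. Let $\mathcal{D}_B^*$ be the set of $\mathbf{n}\in\mathbb{Z}_{\ge0}^d$ such that the $\mathbb{C}[\![t]\!]$-span of $t^{n_1}x_1,\ldots,t^{n_d}x_d$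 is an ideal (if $*=\triangleleft$) or a subalgebra (if $*=\le$). The basis $B$ is nice with respect to $*$ if $R_L^*(T)=\sum_{\mathbf{n}\in\mathcal{D}_B^*}T^{n_1+\cdots+n_d}$. It is simple if for all $i,j$ there exist $l\in\{1,\ldots,d\}$ and $a\in\mathbb{C}[\![t]\!]$ with $[x_i,x_j]=ax_l$ and either $a=0$ or $v(a)=0$. *)

theory Defs
  imports "HOL-Computational_Algebra.Formal_Power_Series" Complex_Main
begin

text \<open>A torsion-free d-dimensional Lie algebra L over C[[t]] with basis x_0..x_(d-1) is
  represented by coordinates: elements are functions nat => complex fps vanishing at indices >= d,
  and the bracket is given by structure constants c i j k ([x_i,x_j] = sum_k c i j k x_k).\<close>

definition vecs :: "nat \<Rightarrow> (nat \<Rightarrow> complex fps) set" where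
  "vecs d = {u. \<forall>i\<ge>d. u i = 0}"

definition lie_br :: "nat \<Rightarrow> (nat \<Rightarrow> nat \<Rightarrow> nat \<Rightarrow> complex fps)
    \<Rightarrow> (nat \<Rightarrow> complex fps) \<Rightarrow> (nat \<Rightarrow> complex fps) \<Rightarrow> (nat \<Rightarrow> complex fps)" where
  "lie_br d c u v = (\<lambda>k. if k < d then (\<Sum>i<d. \<Sum>j<d. u i * v j * c i j k) else 0)"

definition basis_vec :: "nat \<Rightarrow> nat \<Rightarrow> complex fps" where
  "basis_vec i = (\<lambda>k. if k = i then 1 else 0)"

text \<open>Lie algebra axioms on the basis (alternating and Jacobi); bilinearity is built in.\<close>
definition lie_structure :: "nat \<Rightarrow> (nat \<Rightarrow> nat \<Rightarrow> nat \<Rightarrow> complex fps) \<Rightarrow> bool" where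
  "lie_structure d c \<longleftrightarrow>
     (\<forall>i<d. \<forall>k<d. c i i k = 0) \<and>
     (\<forall>i<d. \<forall>j<d. \<forall>k<d. c i j k = - c j i k) \<and>
     (\<forall>i<d. \<forall>j<d. \<forall>m<d. \<forall>k<d.
        (\<Sum>l<d. c j m l * c i l k + c m i l * c j l k + c i j l * c m l k) = 0)"

datatype kind = Subalg | Ideal

text \<open>The C[[t]]-span of t^(n_1) x_1, ..., t^(n_d) x_d.\<close>
definition span_mod :: "nat \<Rightarrow> (nat \<Rightarrow> nat) \<Rightarrow> (nat \<Rightarrow> complex fps) set" where
  "span_mod d n = {u \<in> vecs d. \<forall>i<d. fps_X ^ (n i) dvd u i}"

definition is_kind :: "kind \<Rightarrow> nat \<Rightarrow> (nat \<Rightarrow> nat \<Rightarrow> nat \<Rightarrow> complex fps)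
    \<Rightarrow> (nat \<Rightarrow> complex fps) set \<Rightarrow> bool" where
  "is_kind k d c M \<longleftrightarrow> (case k of
      Subalg \<Rightarrow> (\<forall>u\<in>M. \<forall>v\<in>M. lie_br d c u v \<in> M)
    | Ideal \<Rightarrow> (\<forall>u\<in>vecs d. \<forall>v\<in>M. lie_br d c u v \<in> M))"

definition D_set :: "kind \<Rightarrow> nat \<Rightarrow> (nat \<Rightarrow> nat \<Rightarrow> nat \<Rightarrow> complex fps) \<Rightarrow> (nat \<Rightarrow> nat) set" where
  "D_set k d c = {n. (\<forall>i\<ge>d. n i = 0) \<and> is_kind k d c (span_mod d n)}"

definition br_is :: "nat \<Rightarrow> (nat \<Rightarrow> nat \<Rightarrow> nat \<Rightarrow> complex fps) \<Rightarrow> nat \<Rightarrow> nat \<Rightarrow> complex fps \<Rightarrow> nat \<Rightarrow> bool" where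
  "br_is d c i j a l \<longleftrightarrow> lie_br d c (basis_vec i) (basis_vec j) = (\<lambda>k. if k = l then a else 0)"

definition simple_basis :: "nat \<Rightarrow> (nat \<Rightarrow> nat \<Rightarrow> nat \<Rightarrow> complex fps) \<Rightarrow> bool" where
  "simple_basis d c \<longleftrightarrow> (\<forall>i<d. \<forall>j<d. \<exists>l<d. \<exists>a.
      br_is d c i j a l \<and> (a = 0 \<or> subdegree a = 0))"

definition C_cone :: "kind \<Rightarrow> nat \<Rightarrow> (nat \<Rightarrow> nat \<Rightarrow> nat \<Rightarrow> complex fps) \<Rightarrow> (nat \<Rightarrow> real) set" where
  "C_cone k d c = {y. (\<forall>i\<ge>d. y i = 0) \<and> (\<forall>i<d. y i \<ge> 0) \<and>
     (\<forall>i<d. \<forall>j<d. \<forall>l<d. \<forall>a. br_is d c i j a l \<and> a \<noteq> 0 \<longrightarrow>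
        (case k of Ideal \<Rightarrow> y l \<le> y i \<and> y l \<le> y j
                 | Subalg \<Rightarrow> y l \<le> y i + y j))}"

text \<open>Integer points of the cone (they are nonnegative, hence nat-valued).\<close>
definition C_int :: "kind \<Rightarrow> nat \<Rightarrow> (nat \<Rightarrow> nat \<Rightarrow> nat \<Rightarrow> complex fps) \<Rightarrow> (nat \<Rightarrow> nat) set" where
  "C_int k d c = {n. (\<forall>i\<ge>d. n i = 0) \<and> (\<lambda>i. real (n i)) \<in> C_cone k d c}"

definition gen_fun :: "nat \<Rightarrow> (nat \<Rightarrow> nat) set \<Rightarrow> int fps" where
  "gen_fun d S = Abs_fps (\<lambda>m. int (card {n \<in> S. (\<Sum>i<d. n i) = m}))"

definition nice_basis :: "kind \<Rightarrow> nat \<Rightarrow> (nat \<Rightarrow> nat \<Rightarrow> nat \<Rightarrow> complex fps) \<Rightarrow> int fps \<Rightarrow> bool" where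
  "nice_basis k d c R \<longleftrightarrow> R = gen_fun d (D_set k d c)"

end

theory Submission
  imports Defs
begin

text \<open>
  For a lattice spanned by monomial multiples t^(n_i) x_i of the basis, being closed under
  brackets is a condition on each single structure constant: the bracket of
  t^(m_i) x_i and t^(n_j) x_j has l-th coordinate t^(m_i + n_j) c_ijl, and conversely every
  bracket of lattice elements is a sum of such terms times power series. Hence D_B^* is cut
  out by the inequalities n_l \<le> m_i + n_j + v(c_ijl) for c_ijl \<noteq> 0, where m = n for
  subalgebras and m = 0 for ideals. For a simple basis v(c_ijl) = 0 and c_ijl \<noteq> 0 exactly
  when [x_i, x_j] is a nonzero multiple of x_l; for ideals antisymmetry of the bracket
  turns n_l \<le> n_j into n_l \<le> min(n_i, n_j). These are the integer points of C_B^*.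
\<close>

lemma fps_X_power_dvd_iff:
  fixes f :: "'a::field fps"
  shows "fps_X ^ m dvd f \<longleftrightarrow> f = 0 \<or> m \<le> subdegree f"
  by (cases "f = 0") (simp_all add: fps_dvd_iff)

definition coord_vec :: "nat \<Rightarrow> complex fps \<Rightarrow> nat \<Rightarrow> complex fps" where
  "coord_vec i a = (\<lambda>k. if k = i then a else 0)"

lemma lie_br_coord_vec:
  assumes "i < d" "j < d"
  shows "lie_br d c (coord_vec i a) (coord_vec j b) l = (if l < d then a * b * c i j l else 0)"
proof -
  have "(if ia = i then a else 0) * (if ja = j then b else 0) * c ia ja l
      = (if ja = j then if ia = i then a * b * c i j l else 0 else 0)" for ia ja
    by simp
  then show ?thesis
    using assms by (simp add: lie_br_def coord_vec_def)
qed

lemma br_is_coeff: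
  assumes "br_is d c i j a l" "i < d" "j < d" "k < d"
  shows "c i j k = (if k = l then a else 0)"
proof -
  have "basis_vec i = coord_vec i 1" "basis_vec j = coord_vec j 1"
    by (simp_all add: basis_vec_def coord_vec_def)
  then have "lie_br d c (basis_vec i) (basis_vec j) k = c i j k"
    using assms(2-4) by (simp add: lie_br_coord_vec)
  then show ?thesis
    using assms(1) by (simp add: br_is_def)
qed

lemma simple_basis_coeff:
  assumes "simple_basis d c" "i < d" "j < d"
  obtains l a where "l < d" "a = 0 \<or> subdegree a = 0"
    "\<And>k. k < d \<Longrightarrow> c i j k = (if k = l then a else 0)"
proof -
  from assms obtain l a where l: "l < d" and br: "br_is d c i j a l"
    and a: "a = 0 \<or> subdegree a = 0"
    unfolding simple_basis_def by blast
  show thesis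
    by (rule that[OF l a br_is_coeff[OF br assms(2,3)]])
qed

lemma simple_basis_subdegree_coeff:
  assumes "simple_basis d c" "i < d" "j < d" "l < d"
  shows "subdegree (c i j l) = 0"
proof -
  obtain l' a where "a = 0 \<or> subdegree a = 0" "c i j l = (if l = l' then a else 0)"
    using simple_basis_coeff[OF assms(1-3)] assms(4) by blast
  then show ?thesis
    by auto
qed

lemma simple_basis_br_is_nonzero_iff:
  assumes "simple_basis d c" "i < d" "j < d" "l < d"
  shows "(\<exists>a. br_is d c i j a l \<and> a \<noteq> 0) \<longleftrightarrow> c i j l \<noteq> 0"
proof
  assume "\<exists>a. br_is d c i j a l \<and> a \<noteq> 0"
  then obtain a where br: "br_is d c i j a l" and "a \<noteq> 0"
    by blast
  then show "c i j l \<noteq> 0"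
    using br_is_coeff[OF br assms(2-4)] by simp
next
  assume nonzero: "c i j l \<noteq> 0"
  from assms(1-3) obtain l' a' where "br_is d c i j a' l'"
    unfolding simple_basis_def by blast
  moreover have "l = l'" "c i j l = a'"
    using br_is_coeff[OF calculation assms(2-4)] nonzero by (auto split: if_splits)
  ultimately show "\<exists>a. br_is d c i j a l \<and> a \<noteq> 0"
    using nonzero by blast
qed

lemma coord_vec_in_span_mod:
  assumes "i < d" "fps_X ^ n i dvd a"
  shows "coord_vec i a \<in> span_mod d n"
  using assms by (auto simp: span_mod_def vecs_def coord_vec_def)

lemma lie_br_span_mod_subset_iff:
  "(\<forall>u\<in>span_mod d m. \<forall>v\<in>span_mod d n. lie_br d c u v \<in> span_mod d p) \<longleftrightarrow>
   (\<forall>i<d. \<forall>j<d. \<forall>l<d. c i j l \<noteq> 0 \<longrightarrow> p l \<le> m i + n j + subdegree (c i j l))"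
proof (intro iffI allI impI ballI)
  fix i j l
  assume closed: "\<forall>u\<in>span_mod d m. \<forall>v\<in>span_mod d n. lie_br d c u v \<in> span_mod d p"
    and ijl: "i < d" "j < d" "l < d" and nonzero: "c i j l \<noteq> 0"
  have "lie_br d c (coord_vec i (fps_X ^ m i)) (coord_vec j (fps_X ^ n j)) \<in> span_mod d p"
    using closed ijl by (simp add: coord_vec_in_span_mod)
  then have "fps_X ^ p l dvd fps_X ^ m i * fps_X ^ n j * c i j l"
    using ijl by (simp add: span_mod_def lie_br_coord_vec)
  then show "p l \<le> m i + n j + subdegree (c i j l)"
    using nonzero by (simp add: fps_X_power_dvd_iff)
next
  fix u v
  assume bound: "\<forall>i<d. \<forall>j<d. \<forall>l<d. c i j l \<noteq> 0 \<longrightarrow> p l \<le> m i + n j + subdegree (c i j l)"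
    and u: "u \<in> span_mod d m" and v: "v \<in> span_mod d n"
  have "fps_X ^ p l dvd u i * v j * c i j l" if ijl: "i < d" "j < d" "l < d" for i j l
  proof (cases "c i j l = 0")
    case False
    have "fps_X ^ (m i + n j + subdegree (c i j l)) dvd u i * v j * c i j l"
      unfolding power_add
      using u v ijl by (intro mult_dvd_mono) (auto simp: span_mod_def fps_X_power_dvd_iff)
    moreover have "p l \<le> m i + n j + subdegree (c i j l)"
      using bound ijl False by blast
    ultimately show ?thesis
      using le_imp_power_dvd dvd_trans by blast
  qed simp
  then show "lie_br d c u v \<in> span_mod d p"
    by (auto simp: span_mod_def vecs_def lie_br_def intro!: dvd_sum)
qed

text \<open>Exponents of the left-hand lattice against which closure is tested; the zero exponents
  of the ideal case span all of L.\<close>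

definition left_exp :: "kind \<Rightarrow> (nat \<Rightarrow> nat) \<Rightarrow> nat \<Rightarrow> nat" where
  "left_exp k n = (case k of Subalg \<Rightarrow> n | Ideal \<Rightarrow> (\<lambda>_. 0))"

lemma is_kind_span_mod_iff:
  "is_kind k d c (span_mod d n) \<longleftrightarrow>
   (\<forall>u\<in>span_mod d (left_exp k n). \<forall>v\<in>span_mod d n. lie_br d c u v \<in> span_mod d n)"
proof -
  have "span_mod d (\<lambda>_. 0) = vecs d"
    by (simp add: span_mod_def)
  then show ?thesis
    by (cases k) (simp_all add: is_kind_def left_exp_def)
qed

lemma D_set_eq:
  "D_set k d c = {n. (\<forall>i\<ge>d. n i = 0) \<and>
     (\<forall>i<d. \<forall>j<d. \<forall>l<d. c i j l \<noteq> 0 \<longrightarrow> n l \<le> left_exp k n i + n j + subdegree (c i j l))}"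
  unfolding D_set_def is_kind_span_mod_iff lie_br_span_mod_subset_iff ..

lemma simple_basis_all_br_is_iff:
  assumes "simple_basis d c"
  shows "(\<forall>i<d. \<forall>j<d. \<forall>l<d. \<forall>a. br_is d c i j a l \<and> a \<noteq> 0 \<longrightarrow> P i j l) \<longleftrightarrow>
         (\<forall>i<d. \<forall>j<d. \<forall>l<d. c i j l \<noteq> 0 \<longrightarrow> P i j l)"
proof (intro iffI allI impI)
  fix i j l
  assume bound: "\<forall>i<d. \<forall>j<d. \<forall>l<d. \<forall>a. br_is d c i j a l \<and> a \<noteq> 0 \<longrightarrow> P i j l"
    and ijl: "i < d" "j < d" "l < d" and "c i j l \<noteq> 0"
  then obtain a where "br_is d c i j a l \<and> a \<noteq> 0"
    using simple_basis_br_is_nonzero_iff[OF assms ijl] by blast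
  then show "P i j l"
    using bound ijl by blast
next
  fix i j l a
  assume bound: "\<forall>i<d. \<forall>j<d. \<forall>l<d. c i j l \<noteq> 0 \<longrightarrow> P i j l"
    and ijl: "i < d" "j < d" "l < d" and "br_is d c i j a l \<and> a \<noteq> 0"
  then have "c i j l \<noteq> 0"
    using simple_basis_br_is_nonzero_iff[OF assms ijl] by blast
  then show "P i j l"
    using bound ijl by blast
qed

lemma C_int_eq:
  assumes "simple_basis d c"
  shows "C_int k d c = {n. (\<forall>i\<ge>d. n i = 0) \<and> (\<forall>i<d. \<forall>j<d. \<forall>l<d. c i j l \<noteq> 0 \<longrightarrow>
     (case k of Ideal \<Rightarrow> n l \<le> n i \<and> n l \<le> n j | Subalg \<Rightarrow> n l \<le> n i + n j))}"
  unfolding C_int_def C_cone_def mem_Collect_eq simple_basis_all_br_is_iff[OF assms]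
  by (cases k) (simp_all flip: of_nat_add)

lemma antisymmetric_bound_iff:
  fixes c :: "nat \<Rightarrow> nat \<Rightarrow> nat \<Rightarrow> 'a::group_add"
  assumes "\<forall>i<d. \<forall>j<d. \<forall>l<d. c i j l = - c j i l"
  shows "(\<forall>i<d. \<forall>j<d. \<forall>l<d. c i j l \<noteq> 0 \<longrightarrow> n l \<le> n j) \<longleftrightarrow>
         (\<forall>i<d. \<forall>j<d. \<forall>l<d. c i j l \<noteq> 0 \<longrightarrow> n l \<le> n i \<and> n l \<le> n j)"
proof (intro iffI allI impI conjI)
  fix i j l
  assume bound: "\<forall>i<d. \<forall>j<d. \<forall>l<d. c i j l \<noteq> 0 \<longrightarrow> n l \<le> n j"
    and ijl: "i < d" "j < d" "l < d" and nonzero: "c i j l \<noteq> 0"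
  have "c i j l = - c j i l"
    using assms ijl by blast
  with nonzero have "c j i l \<noteq> 0"
    by auto
  then show "n l \<le> n i"
    using bound ijl by blast
  show "n l \<le> n j"
    using bound ijl nonzero by blast
qed blast

lemma left_exp_bound_iff_cone_bound:
  fixes c :: "nat \<Rightarrow> nat \<Rightarrow> nat \<Rightarrow> 'a::group_add"
  assumes antisym: "\<forall>i<d. \<forall>j<d. \<forall>l<d. c i j l = - c j i l"
  shows "(\<forall>i<d. \<forall>j<d. \<forall>l<d. c i j l \<noteq> 0 \<longrightarrow> n l \<le> left_exp k n i + n j) \<longleftrightarrow>
         (\<forall>i<d. \<forall>j<d. \<forall>l<d. c i j l \<noteq> 0 \<longrightarrow>
            (case k of Ideal \<Rightarrow> n l \<le> n i \<and> n l \<le> n j | Subalg \<Rightarrow> n l \<le> n i + n j))"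
proof (cases k)
  case Subalg
  then show ?thesis
    by (simp add: left_exp_def)
next
  case Ideal
  then show ?thesis
    using antisymmetric_bound_iff[OF antisym] by (simp add: left_exp_def)
qed

lemma D_set_eq_C_int:
  assumes "lie_structure d c" "simple_basis d c"
  shows "D_set k d c = C_int k d c"
proof -
  have antisym: "\<forall>i<d. \<forall>j<d. \<forall>l<d. c i j l = - c j i l"
    using assms(1) unfolding lie_structure_def by (elim conjE)
  have unit_coeffs: "(\<forall>i<d. \<forall>j<d. \<forall>l<d. c i j l \<noteq> 0 \<longrightarrow> n l \<le> left_exp k n i + n j + subdegree (c i j l))
    \<longleftrightarrow> (\<forall>i<d. \<forall>j<d. \<forall>l<d. c i j l \<noteq> 0 \<longrightarrow> n l \<le> left_exp k n i + n j)" for n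
    using simple_basis_subdegree_coeff[OF assms(2)] by simp
  show ?thesis
    unfolding D_set_eq C_int_eq[OF assms(2)] unit_coeffs left_exp_bound_iff_cone_bound[OF antisym] ..
qed

theorem proposition4p1:
  fixes d :: nat and c :: "nat \<Rightarrow> nat \<Rightarrow> nat \<Rightarrow> complex fps"
    and k :: kind and R :: "int fps"
  assumes "lie_structure d c"
    and "nice_basis k d c R"
    and "simple_basis d c"
  shows "R = gen_fun d (C_int k d c)"
proof -
  have "D_set k d c = C_int k d c"
    using assms(1,3) by (rule D_set_eq_C_int)
  with assms(2) show ?thesis
    by (simp add: nice_basis_def)
qed

end
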